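(* Let $\lambda\in\mathbb{C}$, let $C$ be a path, and let $f$ be a function such that all Jackson integrals below converge and all boundary values below exist. Write $K_\lambda(t,x)=\dfrac{(q^{1-\lambda}t/x)_\infty}{(qt/x)_\infty}$. Then $$E_{\lambda;C}[T f](x)=q^{-\lambda-1}\,T_x E_{\lambda;C}[f](x)-x^\lambda\,\frac{1-q}{q}\left[t\,\frac{1-q^{-\lambda}t/x}{1-t/x}\,f(t)\,K_\lambda(t,x)\right]_{t\in\partial C},$$ $$E_{\lambda;C}[D f](x)=q^{-\lambda}\,D_x E_{\lambda;C}[f](x)+x^\lambda\left[\frac{1-q^{-\lambda}t/x}{1-t/x}\,f(t)\,K_\lambda(t,x)\right]_{t\in\partial C},$$ where $Tf$ denotes the function $t\mapsto f(qt)$ and $Df$ denotes the function $t\mapsto \frac{f(t)-f(qt)}{(1-q)t}$.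
   Context: Fix $q\in\mathbb{C}$ with $0<|q|<1$. For a function $f$ of $x$: $T_xf(x)=f(qx)$, $D_xf(x)=\frac{f(x)-f(qx)}{(1-q)x}$. $(a)_\infty=\prod_{k\ge0}(1-aq^k)$. $x^\lambda$ denotes a fixed branch with $T_x x^\lambda=q^\lambda x^\lambda$. Jackson integrals: $\int_0^\tau f(t)d_qt=(1-q)\sum_{n\ge0}f(\tau q^n)\tau q^n$ for $\tau\in\mathbb{C}$; $\int_0^{\tau\infty}f(t)d_qt=(1-q)\sum_{n\in\mathbb{Z}}f(\tau q^n)\tau q^n$; for $\tau_1,\tau_2\in\mathbb{C}\cup\mathbb{C}\infty$, $\int_{[\tau_1,\tau_2]}=\int_{[0,\tau_2]}-\int_{[0,\tau_1]}$. A path is a formal linear combination $C=\sum a_iC_i$ of such intervals, with $\int_C=\sum a_i\int_{C_i}$. Boundary values: $[F(t)]_{t\in\partial[\tau_1,\tau_2]}=F(\tau_2)-F(\tau_1)$, extended linearly to paths, where $F(\tau\infty)=\lim_{n\to-\infty}F(\tau q^n)$ and $F(0)$ means $\lim_{n\to+\infty}F(\tau q^n)$. The $q$-Euler type integral transformation is $E_{\lambda;C}[f](x)=x^\lambda\int_C f(t)\,\frac{(q^{1-\lambda}t/x)_\infty}{(qt/x)_\infty}\,d_qt$. *)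

theory Defs
  imports "HOL-Analysis.Analysis"
begin

definition qpoch :: "complex \<Rightarrow> complex \<Rightarrow> complex" where
  "qpoch q a = (\<Prod>k. 1 - a * q ^ k)"

text \<open>Powers of q are taken w.r.t. a fixed logarithm ell of q (exp ell = q):
  q^s := exp (s * ell).\<close>
definition qpow :: "complex \<Rightarrow> complex \<Rightarrow> complex" where
  "qpow ell s = exp (s * ell)"

definition qK :: "complex \<Rightarrow> complex \<Rightarrow> complex \<Rightarrow> complex \<Rightarrow> complex \<Rightarrow> complex" where
  "qK q ell lam t x = qpoch q (qpow ell (1 - lam) * t / x) / qpoch q (q * t / x)"

definition qT :: "complex \<Rightarrow> (complex \<Rightarrow> complex) \<Rightarrow> complex \<Rightarrow> complex" where
  "qT q f t = f (q * t)"

definition qD :: "complex \<Rightarrow> (complex \<Rightarrow> complex) \<Rightarrow> complex \<Rightarrow> complex" where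
  "qD q f t = (f t - f (q * t)) / ((1 - q) * t)"

text \<open>Basic intervals: Fin_pt tau = [0,tau], Inf_pt tau = [0, tau infinity].
  A path is a formal linear combination (list of coefficient/basic interval pairs);
  [tau1,tau2] is represented as [0,tau2] - [0,tau1].\<close>
datatype qendpt = Fin_pt complex | Inf_pt complex

type_synonym qpath = "(complex \<times> qendpt) list"

fun jint :: "complex \<Rightarrow> (complex \<Rightarrow> complex) \<Rightarrow> qendpt \<Rightarrow> complex" where
  "jint q g (Fin_pt \<tau>) = (1 - q) * (\<Sum>n. g (\<tau> * q ^ n) * (\<tau> * q ^ n))"
| "jint q g (Inf_pt \<tau>) = (1 - q) * ((\<Sum>n. g (\<tau> * q ^ n) * (\<tau> * q ^ n))
      + (\<Sum>n. g (\<tau> * inverse q ^ Suc n) * (\<tau> * inverse q ^ Suc n)))"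

fun jconv :: "complex \<Rightarrow> (complex \<Rightarrow> complex) \<Rightarrow> qendpt \<Rightarrow> bool" where
  "jconv q g (Fin_pt \<tau>) = summable (\<lambda>n. g (\<tau> * q ^ n) * (\<tau> * q ^ n))"
| "jconv q g (Inf_pt \<tau>) = (summable (\<lambda>n. g (\<tau> * q ^ n) * (\<tau> * q ^ n))
      \<and> summable (\<lambda>n. g (\<tau> * inverse q ^ Suc n) * (\<tau> * inverse q ^ Suc n)))"

definition pint :: "complex \<Rightarrow> (complex \<Rightarrow> complex) \<Rightarrow> qpath \<Rightarrow> complex" where
  "pint q g C = (\<Sum>(a, e)\<leftarrow>C. a * jint q g e)"

definition pconv :: "complex \<Rightarrow> (complex \<Rightarrow> complex) \<Rightarrow> qpath \<Rightarrow> bool" where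
  "pconv q g C = (\<forall>(a, e)\<in>set C. jconv q g e)"

text \<open>Boundary values: [F]_{d[0,tau]} = F(tau) - F(0), [F]_{d[0,tau inf]} = F(tau inf) - F(0),
  with F(0) = lim_{n->+inf} F(tau q^n), F(tau inf) = lim_{n->-inf} F(tau q^n).\<close>
fun bval :: "complex \<Rightarrow> (complex \<Rightarrow> complex) \<Rightarrow> qendpt \<Rightarrow> complex" where
  "bval q F (Fin_pt \<tau>) = F \<tau> - lim (\<lambda>n. F (\<tau> * q ^ n))"
| "bval q F (Inf_pt \<tau>) = lim (\<lambda>n. F (\<tau> * inverse q ^ n)) - lim (\<lambda>n. F (\<tau> * q ^ n))"

fun bexists :: "complex \<Rightarrow> (complex \<Rightarrow> complex) \<Rightarrow> qendpt \<Rightarrow> bool" where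
  "bexists q F (Fin_pt \<tau>) = convergent (\<lambda>n. F (\<tau> * q ^ n))"
| "bexists q F (Inf_pt \<tau>) = (convergent (\<lambda>n. F (\<tau> * inverse q ^ n))
      \<and> convergent (\<lambda>n. F (\<tau> * q ^ n)))"

definition pbound :: "complex \<Rightarrow> (complex \<Rightarrow> complex) \<Rightarrow> qpath \<Rightarrow> complex" where
  "pbound q F C = (\<Sum>(a, e)\<leftarrow>C. a * bval q F e)"

definition pbexists :: "complex \<Rightarrow> (complex \<Rightarrow> complex) \<Rightarrow> qpath \<Rightarrow> bool" where
  "pbexists q F C = (\<forall>(a, e)\<in>set C. bexists q F e)"

text \<open>Pole avoidance: the kernels are finite at all lattice points of C.\<close>
fun lattice_ok :: "complex \<Rightarrow> complex \<Rightarrow> qendpt \<Rightarrow> bool" where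
  "lattice_ok q x (Fin_pt \<tau>) = (\<forall>n::nat. qpoch q (\<tau> * q ^ n / x) \<noteq> 0)"
| "lattice_ok q x (Inf_pt \<tau>) = (\<forall>n::int. qpoch q (\<tau> * q powi n / x) \<noteq> 0)"

text \<open>q-Euler transform E_{lambda;C}[f](x) = x^lambda * int_C f(t) K_lambda(t,x) d_qt,
  where P is the chosen branch of x^lambda.\<close>
definition qEuler :: "complex \<Rightarrow> complex \<Rightarrow> (complex \<Rightarrow> complex) \<Rightarrow> complex \<Rightarrow> qpath
    \<Rightarrow> (complex \<Rightarrow> complex) \<Rightarrow> complex \<Rightarrow> complex" where
  "qEuler q ell P lam C f x = P x * pint q (\<lambda>t. f t * qK q ell lam t x) C"

end

(*
  The kernel K(t,x) = (q^(1-lam) t/x)_inf / (q t/x)_inf depends only on t/x, so K(qt,qx) = K(t,x),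
  and (a)_inf = (1 - a) (qa)_inf gives the contiguity relation
  K(t,qx) = (1 - q^(-lam) t/x) / (1 - t/x) K(t,x), which produces the factor in the boundary terms.
  The first formula is then the substitution t -> qt in the Jackson integral of f(qt) K(qt,qx):
  on [0,tau] the shifted lattice sum misses exactly the node tau, while on [0,tau infinity] the
  shift is exact and the boundary values vanish by summability.
  For the second, the contiguity relation splits D f(t) K(t,x) into the q-derivative of
  F(t) = f(t) K(t,qx) plus (q^(-lam) f(t) K(t,x) - F(t)) / ((1-q) x). The Jackson integral of D F
  telescopes to the boundary values of F, and the two remaining integrals combine to
  q^(-lam) D_x E[f](x), because x^lam picks up the factor q^lam under x -> qx.
*)
theory Submission
  imports Defs
begin

lemma qpoch_step:
  assumes "norm q < 1"
  shows "qpoch q b = (1 - b) * qpoch q (q * b)"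
proof -
  let ?f = "\<lambda>k. 1 - b * q ^ k"
  have "summable (\<lambda>k. norm (?f k - 1))"
    using assms by (simp add: norm_mult norm_power summable_geometric)
  then have "convergent_prod ?f"
    by (intro abs_convergent_prod_imp_convergent_prod summable_imp_abs_convergent_prod)
  from has_prod_ignore_initial_segment'[OF this, of 1]
  have "?f has_prod (?f 0 * (\<Prod>k. ?f (k + 1)))" by simp
  then have "prodinf ?f = ?f 0 * (\<Prod>k. ?f (k + 1))" by (rule has_prod_unique[symmetric])
  moreover have "(\<lambda>k. ?f (k + 1)) = (\<lambda>k. 1 - q * b * q ^ k)" by (auto simp: algebra_simps)
  ultimately show ?thesis by (simp add: qpoch_def)
qed

lemma qpow_add: "qpow ell a * qpow ell b = qpow ell (a + b)"
  by (simp add: qpow_def distrib_right exp_add)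

lemma qpow_0 [simp]: "qpow ell 0 = 1"
  by (simp add: qpow_def)

lemma qpow_1: "exp ell = q \<Longrightarrow> qpow ell 1 = q"
  by (simp add: qpow_def)

lemma qpow_minus_1: "exp ell = q \<Longrightarrow> qpow ell (- 1) = 1 / q"
  by (simp add: qpow_def exp_minus field_simps)

lemma qK_scale:
  assumes "q \<noteq> 0"
  shows "qK q ell lam (q * t) (q * x) = qK q ell lam t x"
  using assms by (simp add: qK_def)

lemma qK_shift_right:
  assumes q: "norm q < 1" and ell: "exp ell = q"
  shows "qK q ell lam t (q * x)
    = (1 - qpow ell (- lam) * t / x) / (1 - t / x) * qK q ell lam t x"
proof -
  have "q \<noteq> 0" using ell by auto
  moreover have "qpow ell (1 - lam) = q * qpow ell (- lam)"
    using qpow_add[of ell 1 "- lam"] qpow_1[OF ell] by simp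
  ultimately show ?thesis
    unfolding qK_def
    using qpoch_step[OF q, of "qpow ell (- lam) * t / x"] qpoch_step[OF q, of "t / x"]
    by (simp add: mult.assoc)
qed

lemma qD_mult_self:
  assumes "q \<noteq> 1"
  shows "qD q F t * t = (F t - F (q * t)) / (1 - q)"
  using assms by (cases "t = 0") (simp_all add: qD_def)

lemma qD_mult_qK:
  assumes q: "norm q < 1" and ell: "exp ell = q" and x: "x \<noteq> 0" and t: "t \<noteq> 0"
    and pole: "qpoch q (t / x) \<noteq> 0"
  shows "qD q f t * qK q ell lam t x
    = qD q (\<lambda>s. f s * qK q ell lam s (q * x)) t
      + (qpow ell (- lam) * (f t * qK q ell lam t x) - f t * qK q ell lam t (q * x)) / ((1 - q) * x)"
proof -
  define c where "c = qpow ell (- lam)"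
  define K where "K = qK q ell lam t x"
  define L where "L = qK q ell lam t (q * x)"
  have "1 - t / x \<noteq> 0"
    using pole qpoch_step[OF q, of "t / x"] by auto
  then have "(1 - t / x) * L = (1 - c * t / x) * K"
    using qK_shift_right[OF q ell, of lam t x] unfolding c_def K_def L_def by simp
  then have "(x - t) * L = (x - c * t) * K"
    using x by (simp add: field_simps)
  then have KL: "(K - L) / t = (c * K - L) / x"
    using x t by (simp add: field_simps)
  have "(f t - f (q * t)) * K = (f t * L - f (q * t) * K) + f t * (K - L)"
    by (simp add: algebra_simps)
  then have "qD q f t * K = (f t * L - f (q * t) * K) / ((1 - q) * t) + f t * ((K - L) / t) / (1 - q)"
    unfolding qD_def by (simp add: add_divide_distrib mult.commute)
  also have "(f t * L - f (q * t) * K) / ((1 - q) * t) = qD q (\<lambda>s. f s * qK q ell lam s (q * x)) t"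
    using qK_scale[of q ell lam t x] ell unfolding qD_def K_def L_def by auto
  also note KL
  finally show ?thesis
    unfolding c_def K_def L_def by (simp add: mult.commute right_diff_distrib)
qed

fun qlattice :: "complex \<Rightarrow> qendpt \<Rightarrow> complex set" where
  "qlattice q (Fin_pt \<tau>) = range (\<lambda>n::nat. \<tau> * q ^ n)"
| "qlattice q (Inf_pt \<tau>) = range (\<lambda>n::int. \<tau> * q powi n)"

lemma lattice_ok_iff: "lattice_ok q x e \<longleftrightarrow> (\<forall>t\<in>qlattice q e. qpoch q (t / x) \<noteq> 0)"
  by (cases e) auto

lemma qlattice_Inf_pt_memI:
  "\<tau> * q ^ n \<in> qlattice q (Inf_pt \<tau>)" "\<tau> * inverse q ^ Suc n \<in> qlattice q (Inf_pt \<tau>)"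
proof -
  show "\<tau> * q ^ n \<in> qlattice q (Inf_pt \<tau>)"
    using rangeI[of "\<lambda>n::int. \<tau> * q powi n" "int n"] by (simp add: power_int_of_nat)
  have "q powi (- int (Suc n)) = inverse q ^ Suc n"
    by (simp only: power_int_minus power_int_of_nat power_inverse)
  then show "\<tau> * inverse q ^ Suc n \<in> qlattice q (Inf_pt \<tau>)"
    using rangeI[of "\<lambda>n::int. \<tau> * q powi n" "- int (Suc n)"] by simp
qed

lemma jint_cong:
  assumes "\<And>t. t \<in> qlattice q e \<Longrightarrow> t \<noteq> 0 \<Longrightarrow> g t = h t"
  shows "jint q g e = jint q h e"
proof -
  have gh: "g t * t = h t * t" if "t \<in> qlattice q e" for t
    using assms that by (cases "t = 0") auto
  show ?thesis
  proof (cases e)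
    case (Fin_pt \<tau>)
    then have "(\<lambda>n. g (\<tau> * q ^ n) * (\<tau> * q ^ n)) = (\<lambda>n. h (\<tau> * q ^ n) * (\<tau> * q ^ n))"
      by (intro ext gh) (auto simp: Fin_pt)
    with Fin_pt show ?thesis by simp
  next
    case (Inf_pt \<tau>)
    then have "(\<lambda>n. g (\<tau> * q ^ n) * (\<tau> * q ^ n)) = (\<lambda>n. h (\<tau> * q ^ n) * (\<tau> * q ^ n))"
      and "(\<lambda>n. g (\<tau> * inverse q ^ Suc n) * (\<tau> * inverse q ^ Suc n))
         = (\<lambda>n. h (\<tau> * inverse q ^ Suc n) * (\<tau> * inverse q ^ Suc n))"
      by (intro ext gh, simp only: Inf_pt qlattice_Inf_pt_memI)+
    with Inf_pt show ?thesis by simp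
  qed
qed

lemma suminf_lincomb:
  fixes G H :: "nat \<Rightarrow> 'a::real_normed_field"
  assumes "summable G" "summable H"
  shows "(\<Sum>n. a * G n + b * H n) = a * suminf G + b * suminf H"
proof -
  have "(\<Sum>n. a * G n + b * H n) = (\<Sum>n. a * G n) + (\<Sum>n. b * H n)"
    using assms by (intro suminf_add[symmetric] summable_mult)
  then show ?thesis
    using assms by (simp add: suminf_mult)
qed

lemma jconv_lincomb:
  assumes "jconv q g e" "jconv q h e"
  shows "jconv q (\<lambda>t. a * g t + b * h t) e"
  using assms
  by (cases e) (simp_all only: jconv.simps distrib_right mult.assoc, auto intro: summable_add summable_mult)

lemma jint_lincomb:
  assumes "jconv q g e" "jconv q h e"
  shows "jint q (\<lambda>t. a * g t + b * h t) e = a * jint q g e + b * jint q h e"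
  using assms
  by (cases e)
    (simp_all only: jconv.simps jint.simps distrib_right mult.assoc suminf_lincomb, simp_all add: algebra_simps)

lemma sums_qD_towards_0:
  assumes "q \<noteq> 1" and "convergent (\<lambda>n. F (\<tau> * q ^ n))"
  shows "(\<lambda>n. qD q F (\<tau> * q ^ n) * (\<tau> * q ^ n))
    sums ((F \<tau> - lim (\<lambda>n. F (\<tau> * q ^ n))) / (1 - q))"
proof -
  have "(\<lambda>n. F (\<tau> * q ^ n) - F (\<tau> * q ^ Suc n)) sums (F (\<tau> * q ^ 0) - lim (\<lambda>n. F (\<tau> * q ^ n)))"
    using assms(2) by (intro telescope_sums') (simp add: convergent_LIMSEQ_iff)
  then show ?thesis
    unfolding qD_mult_self[OF assms(1)] by (simp add: sums_divide mult.left_commute)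
qed

lemma sums_qD_towards_infinity:
  assumes "q \<noteq> 0" "q \<noteq> 1" and "convergent (\<lambda>n. F (\<tau> * inverse q ^ n))"
  shows "(\<lambda>n. qD q F (\<tau> * inverse q ^ Suc n) * (\<tau> * inverse q ^ Suc n))
    sums ((lim (\<lambda>n. F (\<tau> * inverse q ^ n)) - F \<tau>) / (1 - q))"
proof -
  have "(\<lambda>n. F (\<tau> * inverse q ^ Suc n) - F (\<tau> * inverse q ^ n))
      sums (lim (\<lambda>n. F (\<tau> * inverse q ^ n)) - F (\<tau> * inverse q ^ 0))"
    using assms(3) by (intro telescope_sums) (simp add: convergent_LIMSEQ_iff)
  moreover have "q * (\<tau> * inverse q ^ Suc n) = \<tau> * inverse q ^ n" for n
    using assms(1) by simp
  ultimately show ?thesis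
    unfolding qD_mult_self[OF assms(2)] by (simp only: power_0 mult_1_right) (rule sums_divide)
qed

lemma jint_qD:
  assumes q: "q \<noteq> 0" "q \<noteq> 1" and F: "bexists q F e"
  shows "jconv q (qD q F) e" and "jint q (qD q F) e = bval q F e"
proof -
  have "1 - q \<noteq> 0" using q by simp
  have "jconv q (qD q F) e \<and> jint q (qD q F) e = bval q F e"
  proof (cases e)
    case (Fin_pt \<tau>)
    with F q \<open>1 - q \<noteq> 0\<close> show ?thesis
      using sums_qD_towards_0[of q F \<tau>] by (simp add: sums_iff)
  next
    case (Inf_pt \<tau>)
    with F q have down: "(\<lambda>n. qD q F (\<tau> * q ^ n) * (\<tau> * q ^ n))
        sums ((F \<tau> - lim (\<lambda>n. F (\<tau> * q ^ n))) / (1 - q))"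
      and up: "(\<lambda>n. qD q F (\<tau> * inverse q ^ Suc n) * (\<tau> * inverse q ^ Suc n))
        sums ((lim (\<lambda>n. F (\<tau> * inverse q ^ n)) - F \<tau>) / (1 - q))"
      by (intro sums_qD_towards_0 sums_qD_towards_infinity; simp)+
    then have "jint q (qD q F) e = (1 - q) * ((F \<tau> - lim (\<lambda>n. F (\<tau> * q ^ n))) / (1 - q))
        + (1 - q) * ((lim (\<lambda>n. F (\<tau> * inverse q ^ n)) - F \<tau>) / (1 - q))"
      using Inf_pt by (simp only: sums_iff jint.simps distrib_left)
    also have "\<dots> = bval q F e"
      using Inf_pt \<open>1 - q \<noteq> 0\<close> by simp
    finally show ?thesis
      using down up Inf_pt by (auto simp: sums_iff)
  qed
  then show "jconv q (qD q F) e" "jint q (qD q F) e = bval q F e"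
    by blast+
qed

lemma suminf_qshift_towards_0:
  fixes g :: "'a \<Rightarrow> 'a::real_normed_field"
  assumes q: "q \<noteq> 0" and sum: "summable (\<lambda>n. g (\<tau> * q ^ n) * (\<tau> * q ^ n))"
  shows "(\<Sum>n. g (q * (\<tau> * q ^ n)) * (\<tau> * q ^ n))
    = ((\<Sum>n. g (\<tau> * q ^ n) * (\<tau> * q ^ n)) - g \<tau> * \<tau>) / q"
proof -
  have shift: "q * (\<tau> * q ^ n) = \<tau> * q ^ Suc n" for n
    by (simp add: ac_simps)
  have "g (q * (\<tau> * q ^ n)) * (\<tau> * q ^ n) = g (\<tau> * q ^ Suc n) * (\<tau> * q ^ Suc n) / q" for n
    unfolding shift using q by simp
  then have "(\<Sum>n. g (q * (\<tau> * q ^ n)) * (\<tau> * q ^ n)) = (\<Sum>n. g (\<tau> * q ^ Suc n) * (\<tau> * q ^ Suc n) / q)"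
    by (simp only:)
  also have "\<dots> = (\<Sum>n. g (\<tau> * q ^ Suc n) * (\<tau> * q ^ Suc n)) / q"
    using sum summable_Suc_iff[of "\<lambda>n. g (\<tau> * q ^ n) * (\<tau> * q ^ n)"] suminf_divide by blast
  also have "(\<Sum>n. g (\<tau> * q ^ Suc n) * (\<tau> * q ^ Suc n)) = (\<Sum>n. g (\<tau> * q ^ n) * (\<tau> * q ^ n)) - g \<tau> * \<tau>"
    using suminf_split_head[OF sum] by simp
  finally show ?thesis .
qed

lemma suminf_qshift_towards_infinity:
  fixes g :: "'a \<Rightarrow> 'a::real_normed_field"
  assumes q: "q \<noteq> 0" and sum: "summable (\<lambda>n. g (\<tau> * inverse q ^ Suc n) * (\<tau> * inverse q ^ Suc n))"
  shows "(\<Sum>n. g (q * (\<tau> * inverse q ^ Suc n)) * (\<tau> * inverse q ^ Suc n))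
    = (g \<tau> * \<tau> + (\<Sum>n. g (\<tau> * inverse q ^ Suc n) * (\<tau> * inverse q ^ Suc n))) / q"
proof -
  have sum': "summable (\<lambda>n. g (\<tau> * inverse q ^ n) * (\<tau> * inverse q ^ n))"
    using sum summable_Suc_iff[of "\<lambda>n. g (\<tau> * inverse q ^ n) * (\<tau> * inverse q ^ n)"] by blast
  have "q * (\<tau> * inverse q ^ Suc n) = \<tau> * inverse q ^ n" for n
    using q by simp
  then have "(\<Sum>n. g (q * (\<tau> * inverse q ^ Suc n)) * (\<tau> * inverse q ^ Suc n))
      = (\<Sum>n. g (\<tau> * inverse q ^ n) * (\<tau> * inverse q ^ n) / q)"
    using q by (simp add: field_simps)
  also have "\<dots> = (\<Sum>n. g (\<tau> * inverse q ^ n) * (\<tau> * inverse q ^ n)) / q"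
    using sum' by (rule suminf_divide)
  also have "(\<Sum>n. g (\<tau> * inverse q ^ n) * (\<tau> * inverse q ^ n))
      = g \<tau> * \<tau> + (\<Sum>n. g (\<tau> * inverse q ^ Suc n) * (\<tau> * inverse q ^ Suc n))"
    using suminf_split_head[OF sum'] by simp
  finally show ?thesis .
qed

lemma jint_shift:
  assumes q: "q \<noteq> 0" and g: "jconv q g e"
  shows "jint q (\<lambda>t. g (q * t)) e = jint q g e / q - (1 - q) / q * bval q (\<lambda>t. g t * t) e"
proof (cases e)
  case (Fin_pt \<tau>)
  define S where "S = (\<Sum>n. g (\<tau> * q ^ n) * (\<tau> * q ^ n))"
  from Fin_pt g have sum: "summable (\<lambda>n. g (\<tau> * q ^ n) * (\<tau> * q ^ n))"
    by simp
  have shifted: "jint q (\<lambda>t. g (q * t)) e = (1 - q) * ((S - g \<tau> * \<tau>) / q)"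
    using Fin_pt unfolding S_def by (simp only: jint.simps suminf_qshift_towards_0[OF q sum])
  have unshifted: "jint q g e = (1 - q) * S"
    using Fin_pt by (simp add: S_def)
  have boundary: "bval q (\<lambda>t. g t * t) e = g \<tau> * \<tau>"
    using Fin_pt limI[OF summable_LIMSEQ_zero[OF sum]] by simp
  show ?thesis
    unfolding shifted unshifted boundary using q by (simp add: field_simps)
next
  case (Inf_pt \<tau>)
  define S where "S = (\<Sum>n. g (\<tau> * q ^ n) * (\<tau> * q ^ n))"
  define S' where "S' = (\<Sum>n. g (\<tau> * inverse q ^ Suc n) * (\<tau> * inverse q ^ Suc n))"
  from Inf_pt g have sum: "summable (\<lambda>n. g (\<tau> * q ^ n) * (\<tau> * q ^ n))"
    and sum': "summable (\<lambda>n. g (\<tau> * inverse q ^ Suc n) * (\<tau> * inverse q ^ Suc n))"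
    by simp_all
  then have "summable (\<lambda>n. g (\<tau> * inverse q ^ n) * (\<tau> * inverse q ^ n))"
    using summable_Suc_iff[of "\<lambda>n. g (\<tau> * inverse q ^ n) * (\<tau> * inverse q ^ n)"] by blast
  then have "lim (\<lambda>n. g (\<tau> * inverse q ^ n) * (\<tau> * inverse q ^ n)) = 0"
    and "lim (\<lambda>n. g (\<tau> * q ^ n) * (\<tau> * q ^ n)) = 0"
    using sum by (blast intro: limI summable_LIMSEQ_zero)+
  with Inf_pt have boundary: "bval q (\<lambda>t. g t * t) e = 0"
    by simp
  have shifted: "jint q (\<lambda>t. g (q * t)) e = (1 - q) * ((S - g \<tau> * \<tau>) / q + (g \<tau> * \<tau> + S') / q)"
    using Inf_pt unfolding S_def S'_def
    by (simp only: jint.simps suminf_qshift_towards_0[OF q sum] suminf_qshift_towards_infinity[OF q sum'])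
  have unshifted: "jint q g e = (1 - q) * (S + S')"
    using Inf_pt by (simp add: S_def S'_def)
  show ?thesis
    unfolding shifted unshifted boundary using q by (simp add: field_simps)
qed

lemma sum_list_lincomb:
  fixes A B D :: "'b \<Rightarrow> 'a::comm_ring"
  assumes "\<forall>(a, e) \<in> set C. A e = \<alpha> * B e + \<beta> * D e"
  shows "(\<Sum>(a, e)\<leftarrow>C. a * A e) = \<alpha> * (\<Sum>(a, e)\<leftarrow>C. a * B e) + \<beta> * (\<Sum>(a, e)\<leftarrow>C. a * D e)"
  using assms by (induction C) (auto simp: algebra_simps)

lemma pconvD: "pconv q g C \<Longrightarrow> (a, e) \<in> set C \<Longrightarrow> jconv q g e"
  by (auto simp: pconv_def)

lemma pint_cong:
  assumes "\<And>a e t. (a, e) \<in> set C \<Longrightarrow> t \<in> qlattice q e \<Longrightarrow> t \<noteq> 0 \<Longrightarrow> g t = h t"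
  shows "pint q g C = pint q h C"
  unfolding pint_def by (intro arg_cong[where f = sum_list] list.map_cong0) (auto intro!: jint_cong assms)

lemma pconv_lincomb:
  assumes "pconv q g C" "pconv q h C"
  shows "pconv q (\<lambda>t. a * g t + b * h t) C"
  using assms unfolding pconv_def by (auto intro: jconv_lincomb)

lemma pint_lincomb:
  assumes "pconv q g C" "pconv q h C"
  shows "pint q (\<lambda>t. a * g t + b * h t) C = a * pint q g C + b * pint q h C"
  unfolding pint_def
  by (rule sum_list_lincomb) (use assms in \<open>blast intro: jint_lincomb pconvD\<close>)

lemma pint_qD:
  assumes "q \<noteq> 0" "q \<noteq> 1" "pbexists q F C"
  shows "pconv q (qD q F) C" and "pint q (qD q F) C = pbound q F C"
  using assms unfolding pconv_def pint_def pbound_def pbexists_def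
  by (induction C) (auto simp: jint_qD)

lemma pint_shift:
  assumes "q \<noteq> 0" "pconv q g C"
  shows "pint q (\<lambda>t. g (q * t)) C = pint q g C / q - (1 - q) / q * pbound q (\<lambda>t. g t * t) C"
proof -
  have "pint q (\<lambda>t. g (q * t)) C = 1 / q * pint q g C + (- (1 - q) / q) * pbound q (\<lambda>t. g t * t) C"
    unfolding pint_def pbound_def
  proof (rule sum_list_lincomb, clarify)
    fix a e
    assume "(a, e) \<in> set C"
    with assms have "jconv q g e"
      by (blast intro: pconvD)
    from jint_shift[OF assms(1) this] show "jint q (\<lambda>t. g (q * t)) e
        = 1 / q * jint q g e + (- (1 - q) / q) * bval q (\<lambda>t. g t * t) e"
      by (simp add: diff_divide_distrib algebra_simps)
  qed
  then show ?thesis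
    using assms(1) by (simp add: field_simps)
qed

lemma pint_qT_mult_qK:
  assumes ell: "exp ell = q"
    and conv: "pconv q (\<lambda>t. f t * qK q ell lam t (q * x)) C"
  shows "pint q (\<lambda>t. qT q f t * qK q ell lam t x) C
    = pint q (\<lambda>t. f t * qK q ell lam t (q * x)) C / q
      - (1 - q) / q * pbound q (\<lambda>t. f t * qK q ell lam t (q * x) * t) C"
proof -
  have "q \<noteq> 0"
    using ell by auto
  then have "(\<lambda>t. qT q f t * qK q ell lam t x) = (\<lambda>t. f (q * t) * qK q ell lam (q * t) (q * x))"
    by (simp add: qT_def qK_scale)
  then show ?thesis
    using pint_shift[OF \<open>q \<noteq> 0\<close> conv] by simp
qed

lemma pint_qD_mult_qK:
  assumes q: "norm q < 1" and ell: "exp ell = q" and x: "x \<noteq> 0"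
    and poles: "\<forall>(a, e)\<in>set C. lattice_ok q x e"
    and conv: "pconv q (\<lambda>t. f t * qK q ell lam t x) C"
    and conv_shifted: "pconv q (\<lambda>t. f t * qK q ell lam t (q * x)) C"
    and boundary: "pbexists q (\<lambda>t. f t * qK q ell lam t (q * x)) C"
  shows "pint q (\<lambda>t. qD q f t * qK q ell lam t x) C
    = pbound q (\<lambda>t. f t * qK q ell lam t (q * x)) C
      + (qpow ell (- lam) * pint q (\<lambda>t. f t * qK q ell lam t x) C
         - pint q (\<lambda>t. f t * qK q ell lam t (q * x)) C) / ((1 - q) * x)"
proof -
  define F where "F = (\<lambda>t. f t * qK q ell lam t (q * x))"
  define G where "G = (\<lambda>t. qpow ell (- lam) * (f t * qK q ell lam t x) + (- 1) * F t)"
  have "q \<noteq> 0" "q \<noteq> 1"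
    using ell q by auto
  have conv_G: "pconv q G C"
    unfolding G_def using conv conv_shifted[folded F_def] by (rule pconv_lincomb)
  have "pint q (\<lambda>t. qD q f t * qK q ell lam t x) C
      = pint q (\<lambda>t. 1 * qD q F t + 1 / ((1 - q) * x) * G t) C"
  proof (rule pint_cong)
    fix a e t
    assume "(a, e) \<in> set C" "t \<in> qlattice q e" "t \<noteq> 0"
    with poles have "qpoch q (t / x) \<noteq> 0"
      by (auto simp: lattice_ok_iff)
    from qD_mult_qK[OF q ell x \<open>t \<noteq> 0\<close> this]
    show "qD q f t * qK q ell lam t x = 1 * qD q F t + 1 / ((1 - q) * x) * G t"
      by (simp add: F_def G_def)
  qed
  also have "\<dots> = 1 * pint q (qD q F) C + 1 / ((1 - q) * x) * pint q G C"
    by (rule pint_lincomb[OF pint_qD(1)[OF \<open>q \<noteq> 0\<close> \<open>q \<noteq> 1\<close> boundary[folded F_def]] conv_G])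
  also have "pint q (qD q F) C = pbound q F C"
    by (rule pint_qD(2)[OF \<open>q \<noteq> 0\<close> \<open>q \<noteq> 1\<close> boundary[folded F_def]])
  also have "pint q G C = qpow ell (- lam) * pint q (\<lambda>t. f t * qK q ell lam t x) C - pint q F C"
    unfolding G_def using pint_lincomb[OF conv conv_shifted[folded F_def], of "qpow ell (- lam)" "- 1"]
    by simp
  finally show ?thesis
    unfolding F_def by simp
qed

theorem mainTheorem1:
  fixes q ell lam x :: complex and P f :: "complex \<Rightarrow> complex" and C :: qpath
  assumes q0: "0 < norm q" and q1: "norm q < 1"
    and ell: "exp ell = q"
    and branch: "\<forall>y. y \<noteq> 0 \<longrightarrow> P (q * y) = qpow ell lam * P y"
    and x0: "x \<noteq> 0"
    and poles: "\<forall>(a, e)\<in>set C. lattice_ok q x e"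
    and convT: "pconv q (\<lambda>t. qT q f t * qK q ell lam t x) C"
    and convD: "pconv q (\<lambda>t. qD q f t * qK q ell lam t x) C"
    and conv1: "pconv q (\<lambda>t. f t * qK q ell lam t x) C"
    and conv2: "pconv q (\<lambda>t. f t * qK q ell lam t (q * x)) C"
    and bT: "pbexists q (\<lambda>t. t * ((1 - qpow ell (- lam) * t / x) / (1 - t / x))
               * f t * qK q ell lam t x) C"
    and bD: "pbexists q (\<lambda>t. ((1 - qpow ell (- lam) * t / x) / (1 - t / x))
               * f t * qK q ell lam t x) C"
  shows "(qEuler q ell P lam C (qT q f) x
           = qpow ell (- lam - 1) * qT q (qEuler q ell P lam C f) x
             - P x * ((1 - q) / q) * pbound q (\<lambda>t. t * ((1 - qpow ell (- lam) * t / x) / (1 - t / x))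
               * f t * qK q ell lam t x) C)
         \<and> (qEuler q ell P lam C (qD q f) x
           = qpow ell (- lam) * qD q (qEuler q ell P lam C f) x
             + P x * pbound q (\<lambda>t. ((1 - qpow ell (- lam) * t / x) / (1 - t / x))
               * f t * qK q ell lam t x) C)"
proof -
  \<comment> \<open>q0, convT, convD and bT are redundant: q \<noteq> 0 follows from ell, and the convergence
    and boundary facts they assert follow from conv1, conv2 and bD.\<close>
  have kernel: "(1 - qpow ell (- lam) * t / x) / (1 - t / x) * qK q ell lam t x
      = qK q ell lam t (q * x)" for t
    using qK_shift_right[OF q1 ell] by simp
  have boundary_functions:
    "(\<lambda>t. t * ((1 - qpow ell (- lam) * t / x) / (1 - t / x)) * f t * qK q ell lam t x)
      = (\<lambda>t. f t * qK q ell lam t (q * x) * t)"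
    "(\<lambda>t. ((1 - qpow ell (- lam) * t / x) / (1 - t / x)) * f t * qK q ell lam t x)
      = (\<lambda>t. f t * qK q ell lam t (q * x))"
    unfolding kernel[symmetric] by (simp_all add: fun_eq_iff mult_ac)
  note integral_T = pint_qT_mult_qK[OF ell conv2]
  note integral_D = pint_qD_mult_qK[OF q1 ell x0 poles conv1 conv2 bD[unfolded boundary_functions]]
  have "qpow ell (- lam - 1) = qpow ell (- lam) / q"
    using qpow_add[of ell "- lam" "- 1"] qpow_minus_1[OF ell] by simp
  moreover have "qpow ell (- lam) * qpow ell lam = 1"
    using qpow_add[of ell "- lam" lam] by simp
  moreover have "P (q * x) = qpow ell lam * P x"
    using branch x0 by blast
  ultimately show ?thesis
    unfolding boundary_functions qEuler_def integral_T integral_D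
    unfolding qT_def qD_def by (simp add: field_simps)
qed

end
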